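(* Let $\alpha>0$ and $p>1$ be constants. For $\xi>0$, let $z$ be the solution of \[ z''+|x|^{\alpha}z^p=0,\qquad z(\xi)=1,\quad z'(\xi)=0. \] Let $a(\xi)$ denote the first root of $z$ greater than $\xi$, and $b(\xi)$ the first root of $z$ to the left of $\xi$. Assume that the equation $a(\xi)=-b(\xi)$ has a unique solution $\xi_0>0$. Then for any $\lambda>0$ the problem \[ u''+\lambda|x|^{\alpha}u^p=0\quad(-1<x<1),\qquad u(-1)=u(1)=0, \] has exactly three positive solutions: \begin{itemize} \item $u_1(x)$, which is an even function; \item $u_2(x)$, which has its point of maximum at $\xi=\xi_0/a(\xi_0)$; \item $u_3(x)=u_2(-x)$. \end{itemize} Moreover, if $m$ denotes the maximum value of $u_2$ (that is, $m=u_2(\xi)$), then $\lambda=a(\xi_0)^{\alpha+2}/m^{p-1}$. *)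

theory Defs
  imports "HOL-Analysis.Analysis"
begin

text \<open>The positive arc of the solution of z'' + |x|^alpha z^p = 0, z(xi) = 1, z'(xi) = 0:
  z is positive on the open interval (lo, hi) containing xi, solves the ODE there,
  and vanishes at lo and hi (so lo, hi are the first roots of z to the left/right of xi).\<close>
definition z_arc :: "real \<Rightarrow> real \<Rightarrow> real \<Rightarrow> (real \<Rightarrow> real) \<Rightarrow> real \<Rightarrow> real \<Rightarrow> bool" where
  "z_arc \<alpha> p \<xi> z lo hi \<longleftrightarrow>
     lo < \<xi> \<and> \<xi> < hi \<and> continuous_on {lo..hi} z \<and>
     (\<exists>z'. (\<forall>x\<in>{lo<..<hi}. z x > 0 \<and> (z has_real_derivative z' x) (at x) \<and>
              (z' has_real_derivative - (\<bar>x\<bar> powr \<alpha> * z x powr p)) (at x)) \<and>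
           z' \<xi> = 0) \<and>
     z \<xi> = 1 \<and> z lo = 0 \<and> z hi = 0"

definition a_root :: "real \<Rightarrow> real \<Rightarrow> real \<Rightarrow> real" where
  "a_root \<alpha> p \<xi> = (THE hi. \<exists>z lo. z_arc \<alpha> p \<xi> z lo hi)"

definition b_root :: "real \<Rightarrow> real \<Rightarrow> real \<Rightarrow> real" where
  "b_root \<alpha> p \<xi> = (THE lo. \<exists>z hi. z_arc \<alpha> p \<xi> z lo hi)"

definition pos_sol :: "real \<Rightarrow> real \<Rightarrow> real \<Rightarrow> (real \<Rightarrow> real) \<Rightarrow> bool" where
  "pos_sol \<alpha> p lam u \<longleftrightarrow>
     continuous_on {-1..1} u \<and> u (-1) = 0 \<and> u 1 = 0 \<and>
     (\<exists>u'. \<forall>x\<in>{-1<..<1}. u x > 0 \<and> (u has_real_derivative u' x) (at x) \<and>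
              (u' has_real_derivative - (lam * \<bar>x\<bar> powr \<alpha> * u x powr p)) (at x))"

end

theory Submission
  imports Defs
begin

text \<open>Every positive solution \<open>u\<close> of the \<open>\<lambda>\<close>-problem attains its maximum \<open>m\<close> at a critical point;
  undoing the scaling \<open>x \<mapsto> A x\<close>, \<open>u \<mapsto> u / m\<close> turns it into an arc of \<open>z'' + \<bar>x\<bar>\<^sup>\<alpha> z\<^sup>p = 0\<close>
  with \<open>z \<xi> = 1\<close>, \<open>z' \<xi> = 0\<close> whose two first roots are \<open>-A\<close> and \<open>A\<close>, and conversely every such arc
  rescales to a solution, the relation \<open>\<lambda> = A\<^bsup>\<alpha>+2\<^esup> / m\<^bsup>p-1\<^esup>\<close> fixing \<open>m\<close>.  Arcs exist for
  every \<open>\<xi>\<close> (a contraction argument in an exponentially weighted sup-norm solves a truncated, globally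
  Lipschitz equation, and concavity forces the solution to vanish on both sides) and are unique
  (Gronwall).  Hence positive solutions correspond to the \<open>\<xi>\<close> with \<open>a(\<xi>) = -b(\<xi>)\<close>, namely
  \<open>0\<close>, \<open>\<xi>\<^sub>0\<close> and, by reflection, \<open>-\<xi>\<^sub>0\<close>: the first gives the even solution, the other two give a
  solution and its mirror image, which is not even because \<open>z'\<close> is strictly decreasing.\<close>


section \<open>Differential inequalities\<close>

lemma increment_le_of_deriv_le:
  fixes f f' :: "real \<Rightarrow> real"
  assumes "a \<le> b"
    and "\<And>s. a \<le> s \<Longrightarrow> s \<le> b \<Longrightarrow> (f has_real_derivative f' s) (at s)"
    and "\<And>s. a \<le> s \<Longrightarrow> s \<le> b \<Longrightarrow> f' s \<le> c"
  shows "f b - f a \<le> c * (b - a)"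
proof -
  have "f b - c * b \<le> f a - c * a"
    by (rule DERIV_nonpos_imp_nonincreasing[OF \<open>a \<le> b\<close>])
       (use assms in \<open>auto intro!: exI derivative_eq_intros\<close>)
  then show ?thesis by (simp add: algebra_simps)
qed

lemma exp_weighted_increment_bound_right:
  fixes \<psi> \<psi>' :: "real \<Rightarrow> real"
  assumes K: "K > 0" and "a \<le> t"
    and deriv: "\<And>s. a \<le> s \<Longrightarrow> s \<le> t \<Longrightarrow> (\<psi> has_real_derivative \<psi>' s) (at s)"
    and bound: "\<And>s. a \<le> s \<Longrightarrow> s \<le> t \<Longrightarrow> \<bar>\<psi>' s\<bar> \<le> M * exp (K * (s - a))"
  shows "\<bar>\<psi> t - \<psi> a\<bar> \<le> M * exp (K * (t - a)) / K"
proof -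
  have "\<bar>\<psi>' a\<bar> \<le> M" using bound[of a] \<open>a \<le> t\<close> by simp
  then have "M \<ge> 0" by linarith
  define \<Phi> where "\<Phi> s = M * exp (K * (s - a)) / K" for s
  have d\<Phi>: "(\<Phi> has_real_derivative M * exp (K * (s - a))) (at s)" for s
    unfolding \<Phi>_def using K by (auto intro!: derivative_eq_intros)
  have mono: "\<Phi> a - \<sigma> * \<psi> a \<le> \<Phi> t - \<sigma> * \<psi> t" if "\<bar>\<sigma>\<bar> = 1" for \<sigma>
  proof (rule DERIV_nonneg_imp_nondecreasing[OF \<open>a \<le> t\<close>])
    fix s assume s: "a \<le> s" "s \<le> t"
    have "\<sigma> * \<psi>' s \<le> \<bar>\<psi>' s\<bar>"
      using that abs_ge_self[of "\<sigma> * \<psi>' s"] by (simp add: abs_mult)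
    with bound[OF s] DERIV_diff[OF d\<Phi> DERIV_cmult[OF deriv[OF s]]]
    show "\<exists>y. ((\<lambda>s. \<Phi> s - \<sigma> * \<psi> s) has_real_derivative y) (at s) \<and> 0 \<le> y"
      by (intro exI[of _ "M * exp (K * (s - a)) - \<sigma> * \<psi>' s"]) auto
  qed
  have "\<Phi> a \<ge> 0" unfolding \<Phi>_def using \<open>M \<ge> 0\<close> K by simp
  with mono[of 1] mono[of "-1"] show ?thesis unfolding \<Phi>_def by (auto simp: abs_if)
qed

lemma exp_weighted_increment_bound:
  fixes \<psi> \<psi>' :: "real \<Rightarrow> real"
  assumes K: "K > 0"
    and deriv: "\<And>s. s \<in> {min a t..max a t} \<Longrightarrow> (\<psi> has_real_derivative \<psi>' s) (at s)"
    and bound: "\<And>s. s \<in> {min a t..max a t} \<Longrightarrow> \<bar>\<psi>' s\<bar> \<le> M * exp (K * \<bar>s - a\<bar>)"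
  shows "\<bar>\<psi> t - \<psi> a\<bar> \<le> M * exp (K * \<bar>t - a\<bar>) / K"
proof (cases "a \<le> t")
  case True
  then show ?thesis
    using exp_weighted_increment_bound_right[OF K True, of \<psi> \<psi>' M] deriv bound by auto
next
  case False
  have "\<bar>\<psi> (- (- t)) - \<psi> (- (- a))\<bar> \<le> M * exp (K * (- t - - a)) / K"
  proof (rule exp_weighted_increment_bound_right[OF K, of "- a" "- t" "\<lambda>s. \<psi> (- s)" "\<lambda>s. - \<psi>' (- s)"])
    show "- a \<le> - t" using False by simp
    fix s assume s: "- a \<le> s" "s \<le> - t"
    show "((\<lambda>s. \<psi> (- s)) has_real_derivative - \<psi>' (- s)) (at s)"
      using DERIV_chain2[OF deriv[of "- s"] DERIV_minus[OF DERIV_ident]] s False by simp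
    show "\<bar>- \<psi>' (- s)\<bar> \<le> M * exp (K * (s - - a))"
      using bound[of "- s"] s False by (simp add: add.commute)
  qed
  with False show ?thesis by simp
qed

lemma exp_weighted_comparison:
  fixes Y1 Y1' g1 Y2 Y2' g2 :: "real \<Rightarrow> real"
  assumes K: "K > 0"
    and d1: "\<And>x. (Y1 has_real_derivative Y1' x) (at x)" "\<And>x. (Y1' has_real_derivative g1 x) (at x)"
    and d2: "\<And>x. (Y2 has_real_derivative Y2' x) (at x)" "\<And>x. (Y2' has_real_derivative g2 x) (at x)"
    and "Y1 \<xi> = Y2 \<xi>" "Y1' \<xi> = Y2' \<xi>"
    and "\<And>x. \<bar>g1 x - g2 x\<bar> \<le> M * exp (K * \<bar>x - \<xi>\<bar>)"
  shows "\<bar>Y1 x - Y2 x\<bar> \<le> M * exp (K * \<bar>x - \<xi>\<bar>) / K\<^sup>2"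
proof -
  have "\<bar>(Y1' s - Y2' s) - (Y1' \<xi> - Y2' \<xi>)\<bar> \<le> M * exp (K * \<bar>s - \<xi>\<bar>) / K" for s
    by (rule exp_weighted_increment_bound[OF K DERIV_diff[OF d1(2) d2(2)]]) (use assms in auto)
  then have "\<bar>Y1' s - Y2' s\<bar> \<le> M / K * exp (K * \<bar>s - \<xi>\<bar>)" for s
    using assms by simp
  then have "\<bar>(Y1 x - Y2 x) - (Y1 \<xi> - Y2 \<xi>)\<bar> \<le> M / K * exp (K * \<bar>x - \<xi>\<bar>) / K"
    by (intro exp_weighted_increment_bound[OF K DERIV_diff[OF d1(1) d2(1)]])
  then show ?thesis using assms by (simp add: power2_eq_square)
qed

lemma exp_weighted_linear_system_bound:
  fixes d d' e :: "real \<Rightarrow> real"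
  assumes K: "K > 0" and L: "L \<ge> 0" and \<xi>: "\<xi> \<in> {a..b}" and y: "y \<in> {a..b}"
    and deriv: "\<And>x. x \<in> {a..b} \<Longrightarrow> (d has_real_derivative d' x) (at x)"
    and deriv2: "\<And>x. x \<in> {a..b} \<Longrightarrow> (d' has_real_derivative e x) (at x)"
    and lip: "\<And>x. x \<in> {a..b} \<Longrightarrow> \<bar>e x\<bar> \<le> L * \<bar>d x\<bar>"
    and initial: "d \<xi> = 0" "d' \<xi> = 0"
    and bound: "\<And>x. x \<in> {a..b} \<Longrightarrow> \<bar>d x\<bar> + \<bar>d' x\<bar> \<le> N * exp (K * \<bar>x - \<xi>\<bar>)"
  shows "\<bar>d y\<bar> + \<bar>d' y\<bar> \<le> N * (L + 1) / K * exp (K * \<bar>y - \<xi>\<bar>)"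
proof -
  have bounds: "s \<in> {a..b}" "\<bar>d s\<bar> \<le> N * exp (K * \<bar>s - \<xi>\<bar>)" "\<bar>d' s\<bar> \<le> N * exp (K * \<bar>s - \<xi>\<bar>)"
    if "s \<in> {min \<xi> y..max \<xi> y}" for s
  proof -
    show s: "s \<in> {a..b}" using that \<xi> y by auto
    show "\<bar>d s\<bar> \<le> N * exp (K * \<bar>s - \<xi>\<bar>)" "\<bar>d' s\<bar> \<le> N * exp (K * \<bar>s - \<xi>\<bar>)"
      using bound[OF s] abs_ge_zero[of "d s"] abs_ge_zero[of "d' s"] by linarith+
  qed
  have "\<bar>d' y - d' \<xi>\<bar> \<le> (L * N) * exp (K * \<bar>y - \<xi>\<bar>) / K"
  proof (rule exp_weighted_increment_bound[OF K deriv2])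
    fix s assume s: "s \<in> {min \<xi> y..max \<xi> y}"
    have "\<bar>e s\<bar> \<le> L * \<bar>d s\<bar>" using lip bounds(1)[OF s] .
    also have "\<dots> \<le> L * (N * exp (K * \<bar>s - \<xi>\<bar>))" using bounds(2)[OF s] L by (rule mult_left_mono)
    finally show "\<bar>e s\<bar> \<le> L * N * exp (K * \<bar>s - \<xi>\<bar>)" by (simp only: mult.assoc)
  qed (use bounds(1) in auto)
  moreover have "\<bar>d y - d \<xi>\<bar> \<le> N * exp (K * \<bar>y - \<xi>\<bar>) / K"
    by (rule exp_weighted_increment_bound[OF K deriv]) (use bounds in auto)
  ultimately have "\<bar>d y\<bar> + \<bar>d' y\<bar> \<le> N * exp (K * \<bar>y - \<xi>\<bar>) / K + L * N * exp (K * \<bar>y - \<xi>\<bar>) / K"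
    using initial by simp
  also have "\<dots> = N * (L + 1) / K * exp (K * \<bar>y - \<xi>\<bar>)" using K by (simp add: field_simps)
  finally show ?thesis .
qed

lemma second_order_gronwall_zero:
  fixes d d' e :: "real \<Rightarrow> real"
  assumes L: "L \<ge> 0" and \<xi>: "\<xi> \<in> {a..b}"
    and deriv: "\<And>x. x \<in> {a..b} \<Longrightarrow> (d has_real_derivative d' x) (at x)"
    and deriv2: "\<And>x. x \<in> {a..b} \<Longrightarrow> (d' has_real_derivative e x) (at x)"
    and lip: "\<And>x. x \<in> {a..b} \<Longrightarrow> \<bar>e x\<bar> \<le> L * \<bar>d x\<bar>"
    and initial: "d \<xi> = 0" "d' \<xi> = 0"
    and x: "x \<in> {a..b}"
  shows "d x = 0"
proof -
  define K where "K = 2 * (L + 1)"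
  have K: "K > 0" unfolding K_def using L by simp
  define \<phi> where "\<phi> x = exp (- (K * \<bar>x - \<xi>\<bar>)) * (\<bar>d x\<bar> + \<bar>d' x\<bar>)" for x
  have "continuous_on {a..b} \<phi>"
    unfolding \<phi>_def using deriv deriv2
    by (intro continuous_intros continuous_at_imp_continuous_on ballI) (auto intro: DERIV_isCont)
  then obtain m where m: "m \<in> {a..b}" "\<And>x. x \<in> {a..b} \<Longrightarrow> \<phi> x \<le> \<phi> m"
    using continuous_attains_sup[of "{a..b}" \<phi>] \<xi> by fastforce
  txt \<open>The weighted supremum \<open>\<phi> m\<close> of \<open>\<bar>d\<bar> + \<bar>d'\<bar>\<close> is at most \<open>(L + 1) / K = 1/2\<close> times itself.\<close>
  have "\<bar>d s\<bar> + \<bar>d' s\<bar> \<le> \<phi> m * exp (K * \<bar>s - \<xi>\<bar>)" if "s \<in> {a..b}" for s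
    using m(2)[OF that] unfolding \<phi>_def by (simp add: exp_minus field_simps)
  then have "\<bar>d y\<bar> + \<bar>d' y\<bar> \<le> \<phi> m * (L + 1) / K * exp (K * \<bar>y - \<xi>\<bar>)" if "y \<in> {a..b}" for y
    by (intro exp_weighted_linear_system_bound[OF K L \<xi> that deriv deriv2 lip initial])
  then have "\<phi> y \<le> \<phi> m * (L + 1) / K" if "y \<in> {a..b}" for y
    using that unfolding \<phi>_def by (simp add: exp_minus field_simps)
  moreover have "\<phi> m * (L + 1) / K = \<phi> m / 2" using L by (simp add: K_def field_simps)
  ultimately have "\<phi> m \<le> \<phi> m / 2" using m(1) by metis
  then have "\<phi> m \<le> 0" by simp
  then have "\<phi> x \<le> 0" using m(2)[OF x] by simp
  then have "\<bar>d x\<bar> + \<bar>d' x\<bar> \<le> 0" unfolding \<phi>_def by (simp add: mult_le_0_iff)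
  then show ?thesis by simp
qed

lemma first_root_right:
  fixes f :: "real \<Rightarrow> real"
  assumes "a \<le> b" "continuous_on {a..b} f" "f a > 0" "f b \<le> 0"
  obtains h where "a < h" "h \<le> b" "f h = 0" "\<And>t. a \<le> t \<Longrightarrow> t < h \<Longrightarrow> f t > 0"
proof -
  define S where "S = {t \<in> {a..b}. f t \<le> 0}"
  have "b \<in> S" using assms unfolding S_def by auto
  moreover have "closed S" unfolding S_def
    by (rule continuous_on_closed_Collect_le[OF assms(2) continuous_on_const closed_atLeastAtMost])
  moreover have S_bdd: "bdd_below S" unfolding S_def by (auto intro: bdd_belowI[of _ a])
  ultimately have hS: "Inf S \<in> S" using closed_contains_Inf by blast
  have pos: "f t > 0" if "a \<le> t" "t < Inf S" for t
    using that hS cInf_lower[OF _ S_bdd, of t] unfolding S_def by force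
  have "Inf S \<noteq> a" using hS assms(3) unfolding S_def by auto
  with hS have "a < Inf S" unfolding S_def by auto
  moreover have "f (Inf S) = 0"
  proof (rule ccontr)
    assume "f (Inf S) \<noteq> 0"
    then have "f (Inf S) < 0" using hS unfolding S_def by auto
    moreover have "continuous_on {a..Inf S} f"
      using assms(2) hS unfolding S_def by (auto intro: continuous_on_subset)
    ultimately obtain t where "t \<in> {a..Inf S}" "f t = 0"
      using IVT2'[of f "Inf S" 0 a] assms(3) \<open>a < Inf S\<close> by force
    with pos[of t] \<open>f (Inf S) \<noteq> 0\<close> show False by (cases "t = Inf S") auto
  qed
  ultimately show thesis using that hS pos unfolding S_def by auto
qed

lemma abs_powr_diff_le:
  fixes a b B p :: real
  assumes "0 \<le> a" "0 \<le> b" "a \<le> B" "b \<le> B" "p \<ge> 1"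
  shows "\<bar>a powr p - b powr p\<bar> \<le> p * B powr (p - 1) * \<bar>a - b\<bar>"
proof -
  have main: "y powr p - x powr p \<le> p * B powr (p - 1) * (y - x)"
    if "0 \<le> x" "x < y" "y \<le> B" for x y
  proof -
    have "continuous_on {x..y} (\<lambda>t. t powr p)"
      using that assms(5) by (intro continuous_on_powr') (auto intro!: continuous_intros)
    moreover have "(\<lambda>t. t powr p) differentiable (at t)" if "x < t" "t < y" for t
      using has_real_derivative_powr[of t p] that \<open>0 \<le> x\<close> real_differentiable_def by fastforce
    ultimately obtain l z where z: "x < z" "z < y" "DERIV (\<lambda>t. t powr p) z :> l"
      "y powr p - x powr p = (y - x) * l"
      using MVT[OF \<open>x < y\<close>, of "\<lambda>t. t powr p"] by blast
    have "l = p * z powr (p - 1)"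
      using DERIV_unique[OF z(3) has_real_derivative_powr[of z p]] z that by auto
    moreover have "z powr (p - 1) \<le> B powr (p - 1)"
      using z that assms(5) by (intro powr_mono2) auto
    ultimately show ?thesis
      using z that assms(5) by (simp add: mult_left_mono mult.commute mult.left_commute)
  qed
  show ?thesis
  proof (cases a b rule: linorder_cases)
    case less
    with main[of a b] assms powr_mono2[of p a b] show ?thesis by (simp add: abs_if)
  next
    case greater
    with main[of b a] assms powr_mono2[of p b a] show ?thesis by (simp add: abs_if abs_minus_commute)
  qed simp
qed

section \<open>Global solutions of second order equations\<close>

lemma continuous_has_antiderivative:
  fixes f :: "real \<Rightarrow> real"
  assumes "continuous_on UNIV f"
  obtains F where "F a = c" "\<And>x. (F has_real_derivative f x) (at x)"
proof -
  obtain F where F: "\<And>x. (F has_vector_derivative f x) (at x)"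
    using einterval_antiderivative[of "-\<infinity>" "\<infinity>" f] assms
    by (auto simp: continuous_on_eq_continuous_at)
  show thesis
    by (rule that[of "\<lambda>x. F x - F a + c"])
       (auto intro!: derivative_eq_intros F[unfolded has_real_derivative_iff_has_vector_derivative[symmetric]])
qed

lemma second_order_primitive:
  fixes g :: "real \<Rightarrow> real"
  assumes "continuous_on UNIV g"
  obtains Y Y' where "Y \<xi> = y\<^sub>0" "Y' \<xi> = v\<^sub>0"
    "\<And>x. (Y has_real_derivative Y' x) (at x)" "\<And>x. (Y' has_real_derivative g x) (at x)"
proof -
  obtain F where F: "F \<xi> = v\<^sub>0" "\<And>x. (F has_real_derivative g x) (at x)"
    using continuous_has_antiderivative[OF assms, of \<xi> v\<^sub>0] by blast
  have "continuous_on UNIV F"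
    using F(2) by (meson DERIV_isCont continuous_at_imp_continuous_on)
  then obtain G where "G \<xi> = y\<^sub>0" "\<And>x. (G has_real_derivative F x) (at x)"
    using continuous_has_antiderivative by blast
  with F that show thesis by blast
qed

lemma second_order_exp_growth:
  fixes Y Y' g :: "real \<Rightarrow> real"
  assumes K: "K > 0"
    and d: "\<And>x. (Y has_real_derivative Y' x) (at x)" "\<And>x. (Y' has_real_derivative g x) (at x)"
    and g: "\<And>x. \<bar>g x\<bar> \<le> C"
  shows "\<bar>Y x\<bar> \<le> (\<bar>Y \<xi>\<bar> + \<bar>Y' \<xi>\<bar> / K + C / K\<^sup>2) * exp (K * \<bar>x - \<xi>\<bar>)"
proof -
  define \<omega> where "\<omega> = exp (K * \<bar>x - \<xi>\<bar>)"
  have "\<bar>g x\<bar> \<le> C" for x by (fact g)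
  then have C: "C \<ge> 0" by (meson abs_ge_zero order_trans)
  have "\<bar>g s - 0\<bar> \<le> C * exp (K * \<bar>s - \<xi>\<bar>)" for s
  proof -
    have "C \<le> C * exp (K * \<bar>s - \<xi>\<bar>)" using C K by (simp add: mult_le_cancel_left1)
    with g[of s] show ?thesis by simp
  qed
  moreover have lin: "((\<lambda>s. Y \<xi> + Y' \<xi> * (s - \<xi>)) has_real_derivative Y' \<xi>) (at s)"
    "((\<lambda>_. Y' \<xi>) has_real_derivative 0) (at s)" for s
    by (auto intro!: derivative_eq_intros)
  ultimately have "\<bar>Y x - (Y \<xi> + Y' \<xi> * (x - \<xi>))\<bar> \<le> C * \<omega> / K\<^sup>2"
    unfolding \<omega>_def by (intro exp_weighted_comparison[OF K d lin]) auto
  moreover have "\<bar>Y' \<xi> * (x - \<xi>)\<bar> \<le> \<bar>Y' \<xi>\<bar> / K * \<omega>"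
  proof -
    have "K * \<bar>x - \<xi>\<bar> \<le> \<omega>"
      unfolding \<omega>_def using exp_ge_add_one_self[of "K * \<bar>x - \<xi>\<bar>"] by linarith
    then have "\<bar>x - \<xi>\<bar> \<le> \<omega> / K" using K by (simp add: field_simps)
    then show ?thesis
      using mult_left_mono[of "\<bar>x - \<xi>\<bar>" "\<omega> / K" "\<bar>Y' \<xi>\<bar>"] by (simp add: abs_mult)
  qed
  moreover have "\<bar>Y \<xi>\<bar> \<le> \<bar>Y \<xi>\<bar> * \<omega>"
    unfolding \<omega>_def using K by (simp add: mult_le_cancel_left1)
  ultimately show ?thesis unfolding \<omega>_def[symmetric] by (simp add: algebra_simps)
qed

lemma exp_weighted_picard_contraction:
  fixes f :: "real \<Rightarrow> real \<Rightarrow> real" and w1 w2 :: "real \<Rightarrow> real"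
  assumes lipschitz: "\<And>x y1 y2. \<bar>f x y1 - f x y2\<bar> \<le> L * \<bar>y1 - y2\<bar>" and L: "L \<ge> 0"
    and d1: "\<And>x. (Y1 has_real_derivative Y1' x) (at x)"
      "\<And>x. (Y1' has_real_derivative f x (exp ((L + 1) * \<bar>x - \<xi>\<bar>) * w1 x)) (at x)"
    and d2: "\<And>x. (Y2 has_real_derivative Y2' x) (at x)"
      "\<And>x. (Y2' has_real_derivative f x (exp ((L + 1) * \<bar>x - \<xi>\<bar>) * w2 x)) (at x)"
    and initial: "Y1 \<xi> = Y2 \<xi>" "Y1' \<xi> = Y2' \<xi>"
    and w: "\<And>x. \<bar>w1 x - w2 x\<bar> \<le> \<delta>"
  shows "\<bar>Y1 x - Y2 x\<bar> \<le> \<delta> / 2 * exp ((L + 1) * \<bar>x - \<xi>\<bar>)"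
proof -
  define K where "K = L + 1"
  have K: "K > 0" using L by (simp add: K_def)
  have "\<bar>f s (exp (K * \<bar>s - \<xi>\<bar>) * w1 s) - f s (exp (K * \<bar>s - \<xi>\<bar>) * w2 s)\<bar>
      \<le> L * \<delta> * exp (K * \<bar>s - \<xi>\<bar>)" for s
  proof -
    have "\<bar>exp (K * \<bar>s - \<xi>\<bar>) * w1 s - exp (K * \<bar>s - \<xi>\<bar>) * w2 s\<bar> \<le> exp (K * \<bar>s - \<xi>\<bar>) * \<delta>"
      using w[of s] by (simp add: abs_mult right_diff_distrib[symmetric])
    then show ?thesis
      using lipschitz[of s] L mult_left_mono order_trans by (fastforce simp: mult_ac)
  qed
  then have "\<bar>Y1 x - Y2 x\<bar> \<le> L * \<delta> * exp (K * \<bar>x - \<xi>\<bar>) / K\<^sup>2"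
    by (intro exp_weighted_comparison[OF K d1[folded K_def] d2[folded K_def] initial])
  also have "\<dots> \<le> \<delta> / 2 * exp (K * \<bar>x - \<xi>\<bar>)"
  proof -
    have "\<delta> \<ge> 0" using w[of x] by linarith
    moreover have "2 * L \<le> K\<^sup>2"
      using L by (simp add: K_def power2_eq_square algebra_simps add_increasing)
    ultimately have "\<delta> * (2 * L) \<le> \<delta> * K\<^sup>2" by (rule mult_left_mono[rotated])
    then have "L * \<delta> / K\<^sup>2 \<le> \<delta> / 2" using K by (simp add: field_simps mult_ac)
    then have "L * \<delta> / K\<^sup>2 * exp (K * \<bar>x - \<xi>\<bar>) \<le> \<delta> / 2 * exp (K * \<bar>x - \<xi>\<bar>)"
      by (rule mult_right_mono) simp
    then show ?thesis by simp
  qed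
  finally show ?thesis unfolding K_def .
qed

lemma second_order_ode_global_solution:
  fixes f :: "real \<Rightarrow> real \<Rightarrow> real"
  assumes cont: "continuous_on UNIV (case_prod f)"
    and bounded: "\<And>x y. \<bar>f x y\<bar> \<le> C"
    and lipschitz: "\<And>x y1 y2. \<bar>f x y1 - f x y2\<bar> \<le> L * \<bar>y1 - y2\<bar>"
  obtains Y Y' where "Y \<xi> = y\<^sub>0" "Y' \<xi> = v\<^sub>0"
    "\<And>x. (Y has_real_derivative Y' x) (at x)" "\<And>x. (Y' has_real_derivative f x (Y x)) (at x)"
proof -
  have "0 \<le> \<bar>f 0 1 - f 0 0\<bar>" by simp
  also have "\<dots> \<le> L" using lipschitz[of 0 1 0] by simp
  finally have L: "L \<ge> 0" .
  define \<omega> where "\<omega> x = exp ((L + 1) * \<bar>x - \<xi>\<bar>)" for x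
  have \<omega>_pos: "\<omega> x > 0" for x unfolding \<omega>_def by simp
  have \<omega>_cont: "continuous_on UNIV \<omega>" unfolding \<omega>_def by (intro continuous_intros)
  txt \<open>A solution is sought as \<open>\<omega> w\<close> with \<open>w\<close> bounded; on this weighted space the Picard
    operator contracts by \<open>1/2\<close>.\<close>
  have "\<forall>w :: real \<Rightarrow>\<^sub>C real. \<exists>Y Y'. Y \<xi> = y\<^sub>0 \<and> Y' \<xi> = v\<^sub>0 \<and> (\<forall>x. (Y has_real_derivative Y' x) (at x) \<and>
      (Y' has_real_derivative f x (\<omega> x * apply_bcontfun w x)) (at x))"
  proof
    fix w :: "real \<Rightarrow>\<^sub>C real"
    have "continuous_on UNIV (\<lambda>x. (x, \<omega> x * apply_bcontfun w x))"
      by (intro continuous_on_Pair continuous_on_id continuous_on_mult \<omega>_cont continuous_on_apply_bcontfun)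
    then have "continuous_on UNIV (\<lambda>x. f x (\<omega> x * apply_bcontfun w x))"
      using continuous_on_compose2[OF cont] by fastforce
    then obtain Y Y' where "Y \<xi> = y\<^sub>0" "Y' \<xi> = v\<^sub>0" "\<And>x. (Y has_real_derivative Y' x) (at x)"
      "\<And>x. (Y' has_real_derivative f x (\<omega> x * apply_bcontfun w x)) (at x)"
      by (rule second_order_primitive[where \<xi> = \<xi> and y\<^sub>0 = y\<^sub>0 and v\<^sub>0 = v\<^sub>0]) blast
    then show "\<exists>Y Y'. Y \<xi> = y\<^sub>0 \<and> Y' \<xi> = v\<^sub>0 \<and> (\<forall>x. (Y has_real_derivative Y' x) (at x) \<and>
      (Y' has_real_derivative f x (\<omega> x * apply_bcontfun w x)) (at x))"
      by blast
  qed
  then obtain Yw Yw' where "\<forall>w. Yw w \<xi> = y\<^sub>0 \<and> Yw' w \<xi> = v\<^sub>0 \<and> (\<forall>x. (Yw w has_real_derivative Yw' w x) (at x) \<and>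
      (Yw' w has_real_derivative f x (\<omega> x * apply_bcontfun w x)) (at x))"
    by (auto simp only: choice_iff)
  then have Yw: "\<And>w. Yw w \<xi> = y\<^sub>0" "\<And>w. Yw' w \<xi> = v\<^sub>0"
    "\<And>w x. (Yw w has_real_derivative Yw' w x) (at x)"
    "\<And>w x. (Yw' w has_real_derivative f x (\<omega> x * apply_bcontfun w x)) (at x)"
    by blast+
  define T where "T w = Bcontfun (\<lambda>x. Yw w x / \<omega> x)" for w
  have "(\<lambda>x. Yw w x / \<omega> x) \<in> bcontfun" for w
  proof (rule bcontfun_normI)
    show "continuous_on UNIV (\<lambda>x. Yw w x / \<omega> x)"
      using Yw(3) \<omega>_cont \<omega>_pos
      by (intro continuous_on_divide) (auto intro: DERIV_isCont continuous_at_imp_continuous_on simp: less_imp_neq[symmetric])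
    show "norm (Yw w x / \<omega> x) \<le> \<bar>y\<^sub>0\<bar> + \<bar>v\<^sub>0\<bar> / (L + 1) + C / (L + 1)\<^sup>2" for x
      using second_order_exp_growth[of "L + 1", OF _ Yw(3,4) bounded, of w x \<xi>] L Yw(1,2) \<omega>_pos[of x]
      unfolding \<omega>_def by (simp add: divide_le_eq)
  qed
  then have T_apply: "apply_bcontfun (T w) x = Yw w x / \<omega> x" for w x
    unfolding T_def by (simp add: Bcontfun_inverse)
  have "dist (T w1) (T w2) \<le> 1 / 2 * dist w1 w2" for w1 w2
  proof (rule dist_bound)
    fix x
    have "\<bar>Yw w1 x - Yw w2 x\<bar> \<le> dist w1 w2 / 2 * \<omega> x"
      unfolding \<omega>_def using Yw(1,2) dist_bounded[of w1 _ w2]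
      by (intro exp_weighted_picard_contraction[OF lipschitz L Yw(3) Yw(4)[unfolded \<omega>_def] Yw(3)
            Yw(4)[unfolded \<omega>_def]]) (simp_all add: dist_real_def)
    then show "dist (apply_bcontfun (T w1) x) (apply_bcontfun (T w2) x) \<le> 1 / 2 * dist w1 w2"
      unfolding T_apply dist_real_def using \<omega>_pos[of x] by (simp add: diff_divide_distrib[symmetric] divide_le_eq)
  qed
  then obtain w where "T w = w" using banach_fix_type[of "1 / 2" T] by auto
  then have "\<omega> x * apply_bcontfun w x = Yw w x" for x
    using T_apply[of w x] \<omega>_pos[of x] by simp
  with Yw that show thesis by metis
qed

section \<open>A truncated equation\<close>

text \<open>Agrees with \<open>\<bar>x\<bar>\<^sup>\<alpha> y\<^sup>p\<close> for \<open>\<bar>x\<bar> \<le> R\<close> and \<open>0 \<le> y \<le> 1\<close>, but is bounded and globally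
  Lipschitz in \<open>y\<close>, so that the global existence theorem above applies.\<close>
definition trunc_force :: "real \<Rightarrow> real \<Rightarrow> real \<Rightarrow> real \<Rightarrow> real \<Rightarrow> real" where
  "trunc_force \<alpha> p R x y = \<bar>max (-R) (min R x)\<bar> powr \<alpha> * max 0 (min 1 y) powr p"

lemma trunc_force_nonneg: "trunc_force \<alpha> p R x y \<ge> 0"
  unfolding trunc_force_def by simp

lemma trunc_force_minus: "trunc_force \<alpha> p R (- x) y = trunc_force \<alpha> p R x y"
proof -
  have "\<bar>max (-R) (min R (- x))\<bar> = \<bar>max (-R) (min R x)\<bar>"
    unfolding max_def min_def by (simp add: abs_if)
  then show ?thesis unfolding trunc_force_def by (simp only:)
qed

lemma trunc_force_eq:
  assumes "\<bar>x\<bar> \<le> R" "0 \<le> y" "y \<le> 1"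
  shows "trunc_force \<alpha> p R x y = \<bar>x\<bar> powr \<alpha> * y powr p"
proof -
  have "max (-R) (min R x) = x" "max 0 (min 1 y) = y" using assms by auto
  then show ?thesis unfolding trunc_force_def by simp
qed

lemma trunc_force_le:
  assumes "\<alpha> > 0" "p > 0" "R \<ge> 0"
  shows "trunc_force \<alpha> p R x y \<le> R powr \<alpha>"
proof -
  have "\<bar>max (-R) (min R x)\<bar> powr \<alpha> \<le> R powr \<alpha>"
    using assms by (intro powr_mono2) auto
  moreover have "max 0 (min 1 y) powr p \<le> 1"
    using assms powr_mono2[of p "max 0 (min 1 y)" 1] by auto
  ultimately show ?thesis
    unfolding trunc_force_def by (metis mult_mono' powr_ge_zero mult_1_right)
qed

lemma trunc_force_lipschitz:
  assumes "\<alpha> > 0" "p \<ge> 1" "R \<ge> 0"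
  shows "\<bar>trunc_force \<alpha> p R x y1 - trunc_force \<alpha> p R x y2\<bar> \<le> R powr \<alpha> * p * \<bar>y1 - y2\<bar>"
proof -
  let ?c = "\<lambda>y. max 0 (min 1 y)"
  have x: "\<bar>max (-R) (min R x)\<bar> powr \<alpha> \<le> R powr \<alpha>"
    using assms by (intro powr_mono2) auto
  have "\<bar>?c y1 powr p - ?c y2 powr p\<bar> \<le> p * 1 powr (p - 1) * \<bar>?c y1 - ?c y2\<bar>"
    using assms by (intro abs_powr_diff_le) auto
  also have "\<dots> \<le> p * \<bar>y1 - y2\<bar>"
  proof -
    have "\<bar>?c y1 - ?c y2\<bar> \<le> \<bar>y1 - y2\<bar>" unfolding max_def min_def by (simp add: abs_if)
    then show ?thesis using assms by (simp add: mult_left_mono)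
  qed
  finally have "\<bar>max (-R) (min R x)\<bar> powr \<alpha> * \<bar>?c y1 powr p - ?c y2 powr p\<bar>
      \<le> R powr \<alpha> * (p * \<bar>y1 - y2\<bar>)"
    by (rule mult_mono[OF x]) simp_all
  moreover have "\<bar>trunc_force \<alpha> p R x y1 - trunc_force \<alpha> p R x y2\<bar>
      = \<bar>max (-R) (min R x)\<bar> powr \<alpha> * \<bar>?c y1 powr p - ?c y2 powr p\<bar>"
    unfolding trunc_force_def by (simp add: abs_mult right_diff_distrib[symmetric])
  ultimately show ?thesis by (simp only: mult.assoc)
qed

lemma trunc_force_continuous:
  assumes "\<alpha> > 0" "p > 0"
  shows "continuous_on UNIV (case_prod (trunc_force \<alpha> p R))"
  unfolding trunc_force_def case_prod_unfold using assms
  by (intro continuous_intros continuous_on_powr') auto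

text \<open>If \<open>Y'' \<le> 0\<close>, \<open>Y \<le> 1\<close> and \<open>Y' \<le> -\<delta>\<close> at \<open>t\<^sub>0 = max \<xi> 0 + 1\<close>, then \<open>Y\<close> vanishes before
  \<open>t\<^sub>0 + 1/\<delta>\<close>, and \<open>\<delta>\<close> is bounded below in terms of \<open>\<alpha>\<close>, \<open>p\<close>, \<open>\<xi>\<close> only.  This a priori bound on
  the first root is what allows the truncation radius to be fixed before the solution is built.\<close>
definition root_bound :: "real \<Rightarrow> real \<Rightarrow> real \<Rightarrow> real" where
  "root_bound \<alpha> p \<xi> = 3 * (max \<xi> 0 + 1) - 2 * \<xi> + 2 / ((1/2) powr \<alpha> * (1/2) powr p)"

lemma root_bound_ge: "root_bound \<alpha> p \<xi> \<ge> max \<xi> 0 + 1"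
proof -
  have "2 / ((1/2) powr \<alpha> * (1/2) powr p) > 0" by simp
  moreover have "\<xi> \<le> max \<xi> 0" by simp
  ultimately show ?thesis unfolding root_bound_def by argo
qed

locale truncated_solution =
  fixes \<alpha> p R \<xi> :: real and Y Y' :: "real \<Rightarrow> real"
  assumes \<alpha>: "\<alpha> > 0" and p: "p > 1"
    and deriv: "\<And>x. (Y has_real_derivative Y' x) (at x)"
    and deriv2: "\<And>x. (Y' has_real_derivative - trunc_force \<alpha> p R x (Y x)) (at x)"
    and initial: "Y \<xi> = 1" "Y' \<xi> = 0"
begin

lemma deriv_antimono: "x \<le> y \<Longrightarrow> Y' y \<le> Y' x"
  by (rule DERIV_nonpos_imp_nonincreasing) (use deriv2 trunc_force_nonneg in \<open>force\<close>)+

lemma continuous: "continuous_on S Y"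
  by (meson DERIV_isCont continuous_at_imp_continuous_on deriv)

lemma decreasing_right: "\<xi> \<le> x \<Longrightarrow> x \<le> y \<Longrightarrow> Y y \<le> Y x"
  by (rule DERIV_nonpos_imp_nonincreasing) (use deriv deriv_antimono[of \<xi>] initial in \<open>force\<close>)+

lemma le_one: "Y x \<le> 1"
proof (cases "\<xi> \<le> x")
  case True
  then show ?thesis using decreasing_right[of \<xi> x] initial by auto
next
  case False
  have "Y x \<le> Y \<xi>"
    by (rule DERIV_nonneg_imp_nondecreasing) (use False deriv deriv_antimono[of _ \<xi>] initial in \<open>force\<close>)+
  then show ?thesis using initial by simp
qed

lemma deriv_le_at_t0:
  assumes t0: "t\<^sub>0 = max \<xi> 0 + 1" and "t\<^sub>0 \<le> R"
  shows "Y' t\<^sub>0 \<le> - min (1 / (2 * (t\<^sub>0 - \<xi>))) ((1/2) powr \<alpha> * (1/2) powr p / 2)"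
proof (cases "Y t\<^sub>0 \<le> 1/2")
  case True
  have "t\<^sub>0 > \<xi>" using t0 by simp
  have "(- Y) t\<^sub>0 - (- Y) \<xi> \<le> - Y' t\<^sub>0 * (t\<^sub>0 - \<xi>)"
    by (rule increment_le_of_deriv_le[where f' = "\<lambda>s. - Y' s"])
       (use \<open>t\<^sub>0 > \<xi>\<close> deriv deriv_antimono in \<open>auto intro: DERIV_minus\<close>)
  then have "Y' t\<^sub>0 \<le> - 1 / (2 * (t\<^sub>0 - \<xi>))"
    using True initial \<open>t\<^sub>0 > \<xi>\<close> by (simp add: field_simps)
  then show ?thesis by (simp add: min_le_iff_disj)
next
  case False
  define c where "c = (1/2) powr \<alpha> * (1/2) powr p"
  have force: "trunc_force \<alpha> p R s (Y s) \<ge> c" if s: "t\<^sub>0 - 1/2 \<le> s" "s \<le> t\<^sub>0" for s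
  proof -
    have "1/2 < Y s" "Y s \<le> 1"
      using decreasing_right[of s t\<^sub>0] s t0 False le_one max.cobounded1[of \<xi> 0] by auto
    moreover have "trunc_force \<alpha> p R s (Y s) = s powr \<alpha> * Y s powr p"
      using trunc_force_eq[of s R "Y s"] s t0 \<open>t\<^sub>0 \<le> R\<close> calculation by auto
    moreover have "(1/2) powr \<alpha> \<le> s powr \<alpha>" using s t0 \<alpha> by (intro powr_mono2) auto
    moreover have "(1/2) powr p \<le> Y s powr p" using calculation(1) p by (intro powr_mono2) auto
    ultimately show ?thesis unfolding c_def by (simp add: mult_mono)
  qed
  have "Y' t\<^sub>0 - Y' (t\<^sub>0 - 1/2) \<le> - c * (t\<^sub>0 - (t\<^sub>0 - 1/2))"
    by (rule increment_le_of_deriv_le[OF _ deriv2]) (use force in auto)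
  moreover have "Y' (t\<^sub>0 - 1/2) \<le> 0" using deriv_antimono[of \<xi> "t\<^sub>0 - 1/2"] initial t0 by auto
  ultimately have "Y' t\<^sub>0 \<le> - (c / 2)" by simp
  then show ?thesis unfolding c_def by (simp add: min_le_iff_disj)
qed

lemma root_right:
  assumes "max \<xi> 0 + 1 \<le> R"
  obtains h where "\<xi> < h" "h \<le> root_bound \<alpha> p \<xi>" "Y h = 0" "\<And>t. \<xi> \<le> t \<Longrightarrow> t < h \<Longrightarrow> Y t > 0"
proof -
  define t\<^sub>0 where "t\<^sub>0 = max \<xi> 0 + 1"
  define a where "a = 1 / (2 * (t\<^sub>0 - \<xi>))"
  define b where "b = (1/2) powr \<alpha> * (1/2) powr p / 2"
  define X where "X = root_bound \<alpha> p \<xi>"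
  have "t\<^sub>0 > \<xi>" "a > 0" "b > 0" unfolding t\<^sub>0_def a_def b_def by auto
  have X: "X - t\<^sub>0 = 1 / a + 1 / b"
    unfolding X_def root_bound_def t\<^sub>0_def a_def b_def by (simp add: field_simps)
  have "Y' s \<le> - min a b" if "t\<^sub>0 \<le> s" for s
    using deriv_antimono[OF that] deriv_le_at_t0[OF t\<^sub>0_def] assms unfolding a_def b_def t\<^sub>0_def by force
  moreover have "t\<^sub>0 \<le> X"
    using X \<open>a > 0\<close> \<open>b > 0\<close> divide_pos_pos[of 1 a] divide_pos_pos[of 1 b] by linarith
  ultimately have "Y X - Y t\<^sub>0 \<le> - min a b * (X - t\<^sub>0)"
    by (intro increment_le_of_deriv_le[OF _ deriv]) auto
  moreover have "min a b * (X - t\<^sub>0) \<ge> 1"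
    unfolding X using \<open>a > 0\<close> \<open>b > 0\<close> by (auto simp: min_def field_simps)
  ultimately have "Y X \<le> 0" using le_one[of t\<^sub>0] by linarith
  moreover have "\<xi> \<le> X" using root_bound_ge[of \<xi> \<alpha> p] unfolding X_def by linarith
  ultimately obtain h where "\<xi> < h" "h \<le> X" "Y h = 0" "\<And>t. \<xi> \<le> t \<Longrightarrow> t < h \<Longrightarrow> Y t > 0"
    using first_root_right[OF _ continuous] initial by (metis zero_less_one)
  then show thesis using that unfolding X_def by blast
qed

end

lemma truncated_solution_reflect:
  assumes "truncated_solution \<alpha> p R \<xi> Y Y'"
  shows "truncated_solution \<alpha> p R (- \<xi>) (\<lambda>x. Y (- x)) (\<lambda>x. - Y' (- x))"
proof -
  interpret truncated_solution \<alpha> p R \<xi> Y Y' by fact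
  show ?thesis
  proof
    fix x
    show "((\<lambda>x. Y (- x)) has_real_derivative - Y' (- x)) (at x)"
      using DERIV_chain2[OF deriv[of "- x"] DERIV_minus[OF DERIV_ident]] by simp
    have "((\<lambda>x. Y' (- x)) has_real_derivative - trunc_force \<alpha> p R (- x) (Y (- x)) * -1) (at x)"
      using DERIV_chain2[OF deriv2[of "- x"] DERIV_minus[OF DERIV_ident]] by simp
    then show "((\<lambda>x. - Y' (- x)) has_real_derivative - trunc_force \<alpha> p R x (Y (- x))) (at x)"
      using DERIV_minus trunc_force_minus by fastforce
  qed (use \<alpha> p initial in auto)
qed

lemma truncated_solution_exists:
  assumes "\<alpha> > 0" "p > 1" "R > 0"
  obtains Y Y' where "truncated_solution \<alpha> p R \<xi> Y Y'"
proof -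
  obtain Y Y' where "Y \<xi> = 1" "Y' \<xi> = 0" "\<And>x. (Y has_real_derivative Y' x) (at x)"
    "\<And>x. (Y' has_real_derivative - trunc_force \<alpha> p R x (Y x)) (at x)"
  proof (rule second_order_ode_global_solution[where f = "\<lambda>x y. - trunc_force \<alpha> p R x y"
        and \<xi> = \<xi> and y\<^sub>0 = 1 and v\<^sub>0 = 0])
    show "continuous_on UNIV (\<lambda>(x, y). - trunc_force \<alpha> p R x y)"
      using trunc_force_continuous[of \<alpha> p R] assms
      by (auto intro: continuous_on_minus simp: case_prod_unfold)
    show "\<bar>- trunc_force \<alpha> p R x y\<bar> \<le> R powr \<alpha>" for x y
      using trunc_force_le[of \<alpha> p R x y] trunc_force_nonneg[of \<alpha> p R x y] assms by simp
    show "\<bar>- trunc_force \<alpha> p R x y1 - - trunc_force \<alpha> p R x y2\<bar> \<le> R powr \<alpha> * p * \<bar>y1 - y2\<bar>" for x y1 y2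
      using trunc_force_lipschitz[of \<alpha> p R x y1 y2] assms by (simp add: abs_minus_commute)
  qed blast
  with assms that show thesis by (metis truncated_solution.intro)
qed

definition pos_emden_fowler_on ::
    "real \<Rightarrow> real \<Rightarrow> real \<Rightarrow> real set \<Rightarrow> (real \<Rightarrow> real) \<Rightarrow> (real \<Rightarrow> real) \<Rightarrow> bool" where
  "pos_emden_fowler_on \<alpha> p c I y y' \<longleftrightarrow> (\<forall>x\<in>I. y x > 0 \<and> (y has_real_derivative y' x) (at x) \<and>
     (y' has_real_derivative - (c * \<bar>x\<bar> powr \<alpha> * y x powr p)) (at x))"

lemma z_arc_iff:
  "z_arc \<alpha> p \<xi> z lo hi \<longleftrightarrow> lo < \<xi> \<and> \<xi> < hi \<and> continuous_on {lo..hi} z \<and>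
     (\<exists>z'. pos_emden_fowler_on \<alpha> p 1 {lo<..<hi} z z' \<and> z' \<xi> = 0) \<and> z \<xi> = 1 \<and> z lo = 0 \<and> z hi = 0"
  by (simp add: z_arc_def pos_emden_fowler_on_def)

lemma pos_sol_iff:
  "pos_sol \<alpha> p lam u \<longleftrightarrow> continuous_on {-1..1} u \<and> u (-1) = 0 \<and> u 1 = 0 \<and>
     (\<exists>u'. pos_emden_fowler_on \<alpha> p lam {-1<..<1} u u')"
  by (simp add: pos_sol_def pos_emden_fowler_on_def)

lemma z_arc_exists:
  assumes \<alpha>: "\<alpha> > 0" and p: "p > 1"
  obtains z lo hi where "z_arc \<alpha> p \<xi> z lo hi"
proof -
  define R where "R = root_bound \<alpha> p \<xi> + root_bound \<alpha> p (- \<xi>)"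
  have bounds: "max \<xi> 0 + 1 \<le> root_bound \<alpha> p \<xi>" "max (- \<xi>) 0 + 1 \<le> root_bound \<alpha> p (- \<xi>)"
    by (fact root_bound_ge)+
  then have "max \<xi> 0 + 1 \<le> R" "max (- \<xi>) 0 + 1 \<le> R" "R > 0" unfolding R_def by auto
  obtain Y Y' where "truncated_solution \<alpha> p R \<xi> Y Y'"
    using truncated_solution_exists[OF \<alpha> p \<open>R > 0\<close>] .
  then interpret Y: truncated_solution \<alpha> p R \<xi> Y Y' .
  interpret Yr: truncated_solution \<alpha> p R "- \<xi>" "\<lambda>x. Y (- x)" "\<lambda>x. - Y' (- x)"
    by (rule truncated_solution_reflect) unfold_locales
  obtain hi where hi: "\<xi> < hi" "hi \<le> root_bound \<alpha> p \<xi>" "Y hi = 0"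
    "\<And>t. \<xi> \<le> t \<Longrightarrow> t < hi \<Longrightarrow> Y t > 0"
    using Y.root_right \<open>max \<xi> 0 + 1 \<le> R\<close> by blast
  obtain h where h: "- \<xi> < h" "h \<le> root_bound \<alpha> p (- \<xi>)" "Y (- h) = 0"
    "\<And>t. - \<xi> \<le> t \<Longrightarrow> t < h \<Longrightarrow> Y (- t) > 0"
    using Yr.root_right \<open>max (- \<xi>) 0 + 1 \<le> R\<close> by blast
  have pos: "Y x > 0" if "- h < x" "x < hi" for x
    using hi(4)[of x] h(4)[of "- x"] that by (cases "\<xi> \<le> x") auto
  have "\<bar>x\<bar> \<le> R" if "- h < x" "x < hi" for x
    using that hi(2) h(2) bounds unfolding R_def by auto
  with pos have "trunc_force \<alpha> p R x (Y x) = \<bar>x\<bar> powr \<alpha> * Y x powr p" if "- h < x" "x < hi" for x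
    using trunc_force_eq Y.le_one that by (simp add: less_imp_le)
  then have "pos_emden_fowler_on \<alpha> p 1 {- h<..<hi} Y Y'"
    unfolding pos_emden_fowler_on_def using pos Y.deriv Y.deriv2 by (metis greaterThanLessThan_iff mult_1)
  then have "z_arc \<alpha> p \<xi> Y (- h) hi"
    unfolding z_arc_iff using hi h Y.initial Y.continuous by auto
  then show thesis by (rule that)
qed

lemma pos_emden_fowler_on_subset:
  "pos_emden_fowler_on \<alpha> p c J y y' \<Longrightarrow> I \<subseteq> J \<Longrightarrow> pos_emden_fowler_on \<alpha> p c I y y'"
  unfolding pos_emden_fowler_on_def by blast

lemma pos_emden_fowler_on_deriv_antimono:
  assumes "c \<ge> 0" "pos_emden_fowler_on \<alpha> p c {lo<..<hi} y y'" "lo < u" "u \<le> v" "v < hi"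
  shows "y' v \<le> y' u"
proof (rule DERIV_nonpos_imp_nonincreasing[OF \<open>u \<le> v\<close>])
  fix s assume "u \<le> s" "s \<le> v"
  with assms show "\<exists>l. (y' has_real_derivative l) (at s) \<and> l \<le> 0"
    unfolding pos_emden_fowler_on_def by (auto intro!: exI)
qed

lemma emden_fowler_force_lipschitz:
  fixes c x y1 y2 :: real
  assumes \<alpha>: "\<alpha> \<ge> 0" and p: "p \<ge> 1" and x: "\<bar>x\<bar> \<le> X"
    and y: "0 \<le> y1" "0 \<le> y2" "y1 \<le> B" "y2 \<le> B"
  shows "\<bar>- (c * \<bar>x\<bar> powr \<alpha> * y1 powr p) - - (c * \<bar>x\<bar> powr \<alpha> * y2 powr p)\<bar>
    \<le> \<bar>c\<bar> * X powr \<alpha> * (p * B powr (p - 1)) * \<bar>y1 - y2\<bar>"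
proof -
  have "\<bar>x\<bar> powr \<alpha> \<le> X powr \<alpha>" using x \<alpha> by (intro powr_mono2) auto
  moreover have "\<bar>y1 powr p - y2 powr p\<bar> \<le> p * B powr (p - 1) * \<bar>y1 - y2\<bar>"
    using y p by (intro abs_powr_diff_le) auto
  ultimately have "\<bar>c\<bar> * \<bar>x\<bar> powr \<alpha> * \<bar>y1 powr p - y2 powr p\<bar>
      \<le> \<bar>c\<bar> * X powr \<alpha> * (p * B powr (p - 1)) * \<bar>y1 - y2\<bar>"
    by (simp add: mult.assoc mult_mono mult_left_mono)
  then show ?thesis
    by (simp add: abs_mult right_diff_distrib[symmetric] mult.assoc) (metis abs_minus_commute)
qed

lemma pos_emden_fowler_on_unique:
  assumes \<alpha>: "\<alpha> \<ge> 0" and p: "p \<ge> 1"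
    and y1: "pos_emden_fowler_on \<alpha> p c {lo<..<hi} y1 y1'"
    and y2: "pos_emden_fowler_on \<alpha> p c {lo<..<hi} y2 y2'"
    and \<xi>: "\<xi> \<in> {lo<..<hi}" and initial: "y1 \<xi> = y2 \<xi>" "y1' \<xi> = y2' \<xi>"
    and t: "t \<in> {lo<..<hi}"
  shows "y1 t = y2 t"
proof -
  define J where "J = {min \<xi> t..max \<xi> t}"
  have J: "J \<subseteq> {lo<..<hi}" unfolding J_def using \<xi> t by auto
  note sol = y1[unfolded pos_emden_fowler_on_def, rule_format] y2[unfolded pos_emden_fowler_on_def, rule_format]
  have "isCont y1 x" "isCont y2 x" if "x \<in> J" for x
    using sol[of x] J that by (meson DERIV_isCont greaterThanLessThan_iff subsetD)+
  then have "continuous_on J y1" "continuous_on J y2"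
    by (auto intro!: continuous_at_imp_continuous_on)
  then have "bounded (y1 ` J)" "bounded (y2 ` J)"
    unfolding J_def by (auto intro: compact_imp_bounded compact_continuous_image)
  then obtain B1 B2 where "\<And>x. x \<in> J \<Longrightarrow> \<bar>y1 x\<bar> \<le> B1" "\<And>x. x \<in> J \<Longrightarrow> \<bar>y2 x\<bar> \<le> B2"
    unfolding bounded_iff by auto
  then obtain B where B: "\<And>x. x \<in> J \<Longrightarrow> y1 x \<le> B \<and> y2 x \<le> B"
    by (metis abs_le_D1 max.cobounded1 max.cobounded2 order_trans)
  define L where "L = \<bar>c\<bar> * (\<bar>\<xi>\<bar> + \<bar>t\<bar>) powr \<alpha> * (p * B powr (p - 1))"
  have "L \<ge> 0" unfolding L_def using p by simp
  have "y1 t - y2 t = 0"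
  proof (rule second_order_gronwall_zero[OF \<open>L \<ge> 0\<close>, of \<xi> "min \<xi> t" "max \<xi> t"
        "\<lambda>x. y1 x - y2 x" "\<lambda>x. y1' x - y2' x"
        "\<lambda>x. - (c * \<bar>x\<bar> powr \<alpha> * y1 x powr p) - - (c * \<bar>x\<bar> powr \<alpha> * y2 x powr p)"])
    fix x assume "x \<in> {min \<xi> t..max \<xi> t}"
    then have "x \<in> J" "x \<in> {lo<..<hi}" "\<bar>x\<bar> \<le> \<bar>\<xi>\<bar> + \<bar>t\<bar>" using J unfolding J_def by auto
    show "((\<lambda>x. y1 x - y2 x) has_real_derivative y1' x - y2' x) (at x)"
      by (intro DERIV_diff) (use sol[of x] \<open>x \<in> {lo<..<hi}\<close> in auto)
    show "((\<lambda>x. y1' x - y2' x) has_real_derivative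
        - (c * \<bar>x\<bar> powr \<alpha> * y1 x powr p) - - (c * \<bar>x\<bar> powr \<alpha> * y2 x powr p)) (at x)"
      by (intro DERIV_diff) (use sol[of x] \<open>x \<in> {lo<..<hi}\<close> in auto)
    show "\<bar>- (c * \<bar>x\<bar> powr \<alpha> * y1 x powr p) - - (c * \<bar>x\<bar> powr \<alpha> * y2 x powr p)\<bar>
        \<le> L * \<bar>y1 x - y2 x\<bar>"
      unfolding L_def using sol[of x] B[of x] \<open>x \<in> J\<close> \<open>x \<in> {lo<..<hi}\<close>
      by (intro emden_fowler_force_lipschitz[OF \<alpha> p \<open>\<bar>x\<bar> \<le> \<bar>\<xi>\<bar> + \<bar>t\<bar>\<close>]) auto
  qed (use initial in auto)
  then show ?thesis by simp
qed

lemma pos_emden_fowler_on_rescale: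
  assumes A: "A \<noteq> 0" and M: "M > 0" and y: "pos_emden_fowler_on \<alpha> p c I y y'"
  shows "pos_emden_fowler_on \<alpha> p (c * \<bar>A\<bar> powr (\<alpha> + 2) / M powr (p - 1)) {x. A * x \<in> I}
    (\<lambda>x. M * y (A * x)) (\<lambda>x. M * A * y' (A * x))"
  unfolding pos_emden_fowler_on_def
proof (intro ballI conjI)
  fix x assume "x \<in> {x. A * x \<in> I}"
  then have y: "y (A * x) > 0" "(y has_real_derivative y' (A * x)) (at (A * x))"
    "(y' has_real_derivative - (c * \<bar>A * x\<bar> powr \<alpha> * y (A * x) powr p)) (at (A * x))"
    using y unfolding pos_emden_fowler_on_def by auto
  have dA: "((\<lambda>x. A * x) has_real_derivative A) (at x)" by (auto intro!: derivative_eq_intros)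
  show "M * y (A * x) > 0" using M y(1) by simp
  show "((\<lambda>x. M * y (A * x)) has_real_derivative M * A * y' (A * x)) (at x)"
    using DERIV_cmult[OF DERIV_chain2[OF y(2) dA], of M] by (simp add: mult_ac)
  have "\<bar>A * x\<bar> powr \<alpha> = \<bar>A\<bar> powr \<alpha> * \<bar>x\<bar> powr \<alpha>" by (simp add: abs_mult powr_mult)
  moreover have "(M * y (A * x)) powr p = M powr (p - 1) * M * y (A * x) powr p"
    using M y(1) by (simp add: powr_mult powr_diff)
  moreover have "\<bar>A\<bar> powr (\<alpha> + 2) = \<bar>A\<bar> powr \<alpha> * (A * A)"
    using A by (simp add: powr_add power2_eq_square)
  ultimately have "- (c * \<bar>A\<bar> powr (\<alpha> + 2) / M powr (p - 1) * \<bar>x\<bar> powr \<alpha> * (M * y (A * x)) powr p)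
      = M * A * (- (c * \<bar>A * x\<bar> powr \<alpha> * y (A * x) powr p) * A)"
    using M by (simp add: field_simps)
  then show "((\<lambda>x. M * A * y' (A * x)) has_real_derivative
      - (c * \<bar>A\<bar> powr (\<alpha> + 2) / M powr (p - 1) * \<bar>x\<bar> powr \<alpha> * (M * y (A * x)) powr p)) (at x)"
    using DERIV_cmult[OF DERIV_chain2[OF y(3) dA], of "M * A"] by simp
qed

lemma pos_emden_fowler_on_reflect:
  assumes "pos_emden_fowler_on \<alpha> p c {lo<..<hi} y y'"
  shows "pos_emden_fowler_on \<alpha> p c {- hi<..<- lo} (\<lambda>x. y (- x)) (\<lambda>x. - y' (- x))"
proof -
  have "{x. - 1 * x \<in> {lo<..<hi}} = {- hi<..<- lo}" by auto
  with pos_emden_fowler_on_rescale[OF _ _ assms, of "- 1" 1] show ?thesis by simp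
qed

lemma pos_emden_fowler_on_critical_point:
  assumes "a < b" "continuous_on {a..b} u" "u a = 0" "u b = 0"
    and "pos_emden_fowler_on \<alpha> p c {a<..<b} u u'"
  obtains \<eta> where "a < \<eta>" "\<eta> < b" "u' \<eta> = 0"
proof -
  have "\<exists>\<eta>. a < \<eta> \<and> \<eta> < b \<and> (*) (u' \<eta>) = (\<lambda>v. 0)"
    by (rule Rolle_deriv[of a b u "\<lambda>x. (*) (u' x)"])
       (use assms in \<open>auto simp: has_field_derivative_def pos_emden_fowler_on_def\<close>)
  then obtain \<eta> where \<eta>: "a < \<eta>" "\<eta> < b" "(*) (u' \<eta>) = (\<lambda>v. 0)" by blast
  from fun_cong[OF \<eta>(3), of 1] have "u' \<eta> = 0" by simp
  with \<eta>(1,2) show thesis by (rule that)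
qed

section \<open>Uniqueness and shape of arcs\<close>

lemma z_arc_reflect:
  assumes "z_arc \<alpha> p \<xi> z lo hi"
  shows "z_arc \<alpha> p (- \<xi>) (\<lambda>x. z (- x)) (- hi) (- lo)"
proof -
  obtain z' where z: "lo < \<xi>" "\<xi> < hi" "continuous_on {lo..hi} z"
    "pos_emden_fowler_on \<alpha> p 1 {lo<..<hi} z z'" "z' \<xi> = 0" "z \<xi> = 1" "z lo = 0" "z hi = 0"
    using assms unfolding z_arc_iff by blast
  have "continuous_on {- hi..- lo} (\<lambda>x. z (- x))"
    by (rule continuous_on_compose2[OF z(3) continuous_on_minus[OF continuous_on_id]]) auto
  with pos_emden_fowler_on_reflect[OF z(4)] z show ?thesis
    unfolding z_arc_iff by (intro conjI exI[of _ "\<lambda>x. - z' (- x)"]) simp_all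
qed

lemma z_arc_agree:
  assumes \<alpha>: "\<alpha> > 0" and p: "p > 1"
    and z1: "z_arc \<alpha> p \<xi> z1 lo1 hi1" and z2: "z_arc \<alpha> p \<xi> z2 lo2 hi2"
    and x: "max lo1 lo2 < x" "x < min hi1 hi2"
  shows "z1 x = z2 x"
proof -
  obtain z1' z2' where sol: "pos_emden_fowler_on \<alpha> p 1 {lo1<..<hi1} z1 z1'"
    "pos_emden_fowler_on \<alpha> p 1 {lo2<..<hi2} z2 z2'" and deriv: "z1' \<xi> = z2' \<xi>"
    using z1 z2 unfolding z_arc_iff by auto
  let ?I = "{max lo1 lo2<..<min hi1 hi2}"
  have I: "\<xi> \<in> ?I" "z1 \<xi> = z2 \<xi>" "x \<in> ?I"
    using z1 z2 x unfolding z_arc_iff by simp_all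
  have "?I \<subseteq> {lo1<..<hi1}" "?I \<subseteq> {lo2<..<hi2}" by auto
  then have on: "pos_emden_fowler_on \<alpha> p 1 ?I z1 z1'" "pos_emden_fowler_on \<alpha> p 1 ?I z2 z2'"
    using pos_emden_fowler_on_subset sol by blast+
  show ?thesis
    by (rule pos_emden_fowler_on_unique[of \<alpha> p 1 "max lo1 lo2" "min hi1 hi2" z1 z1' z2 z2' \<xi> x,
          OF less_imp_le[OF \<alpha>] less_imp_le[OF p] on I(1,2) deriv I(3)])
qed

lemma z_arc_hi_le:
  assumes \<alpha>: "\<alpha> > 0" and p: "p > 1"
    and z1: "z_arc \<alpha> p \<xi> z1 lo1 hi1" and z2: "z_arc \<alpha> p \<xi> z2 lo2 hi2"
  shows "hi1 \<le> hi2"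
proof (rule ccontr)
  assume "\<not> hi1 \<le> hi2"
  obtain z1' where z1': "lo1 < \<xi>" "pos_emden_fowler_on \<alpha> p 1 {lo1<..<hi1} z1 z1'"
    using z1 unfolding z_arc_iff by blast
  have "\<xi> < hi2" "continuous_on {\<xi>..hi2} z2" "z2 hi2 = 0"
    using z2 unfolding z_arc_iff by (auto elim: continuous_on_subset)
  have "isCont z1 x" if "x \<in> {\<xi>..hi2}" for x
    using z1' that \<open>\<not> hi1 \<le> hi2\<close> unfolding pos_emden_fowler_on_def
    by (meson DERIV_isCont greaterThanLessThan_iff atLeastAtMost_iff less_le_trans not_le order_le_less_trans)
  then have "continuous_on {\<xi>..hi2} z1" by (simp add: continuous_at_imp_continuous_on)
  then have "continuous_on {\<xi>..hi2} (\<lambda>x. z1 x - z2 x)"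
    using \<open>continuous_on {\<xi>..hi2} z2\<close> by (rule continuous_on_diff)
  moreover have "z1 x - z2 x = 0" if "x \<in> {\<xi>..<hi2}" for x
    using z_arc_agree[OF \<alpha> p z1 z2, of x] z1' z2 that \<open>\<not> hi1 \<le> hi2\<close> unfolding z_arc_iff by auto
  ultimately have "z1 hi2 - z2 hi2 = 0"
    using continuous_constant_on_closure[of "{\<xi>..<hi2}" "\<lambda>x. z1 x - z2 x" 0 hi2] \<open>\<xi> < hi2\<close> by simp
  moreover have "z1 hi2 > 0"
    using z1' \<open>\<xi> < hi2\<close> \<open>\<not> hi1 \<le> hi2\<close> unfolding pos_emden_fowler_on_def by auto
  ultimately show False using \<open>z2 hi2 = 0\<close> by simp
qed

lemma z_arc_unique:
  assumes \<alpha>: "\<alpha> > 0" and p: "p > 1"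
    and z1: "z_arc \<alpha> p \<xi> z1 lo1 hi1" and z2: "z_arc \<alpha> p \<xi> z2 lo2 hi2"
  shows "lo1 = lo2" "hi1 = hi2" "\<And>x. x \<in> {lo1..hi1} \<Longrightarrow> z1 x = z2 x"
proof -
  show hi: "hi1 = hi2" using z_arc_hi_le[OF \<alpha> p z1 z2] z_arc_hi_le[OF \<alpha> p z2 z1] by simp
  show lo: "lo1 = lo2"
    using z_arc_hi_le[OF \<alpha> p z_arc_reflect[OF z1] z_arc_reflect[OF z2]]
      z_arc_hi_le[OF \<alpha> p z_arc_reflect[OF z2] z_arc_reflect[OF z1]] by simp
  have ends: "z1 lo1 = 0" "z1 hi1 = 0" "z2 lo2 = 0" "z2 hi2 = 0"
    using z1 z2 unfolding z_arc_iff by simp_all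
  fix x assume "x \<in> {lo1..hi1}"
  then consider "x = lo1" | "x = hi1" | "max lo1 lo2 < x" "x < min hi1 hi2"
    using hi lo by fastforce
  then show "z1 x = z2 x"
    by cases (use ends hi lo z_arc_agree[OF \<alpha> p z1 z2, of x] in simp_all)
qed

lemma a_root_eq:
  assumes "\<alpha> > 0" "p > 1" "z_arc \<alpha> p \<xi> z lo hi"
  shows "a_root \<alpha> p \<xi> = hi"
  unfolding a_root_def
  by (rule the_equality) (use assms z_arc_unique(2)[OF assms(1,2)] in blast)+

lemma b_root_eq:
  assumes "\<alpha> > 0" "p > 1" "z_arc \<alpha> p \<xi> z lo hi"
  shows "b_root \<alpha> p \<xi> = lo"
  unfolding b_root_def
  by (rule the_equality) (use assms z_arc_unique(1)[OF assms(1,2)] in blast)+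

lemma z_arc_le_one:
  assumes z: "z_arc \<alpha> p \<xi> z lo hi" and x: "x \<in> {lo..hi}"
  shows "z x \<le> 1"
proof -
  obtain z' where z': "pos_emden_fowler_on \<alpha> p 1 {lo<..<hi} z z'" "z' \<xi> = 0"
    and z0: "lo < \<xi>" "\<xi> < hi" "z \<xi> = 1" "z lo = 0" "z hi = 0"
    using z unfolding z_arc_iff by blast
  have deriv: "(z has_real_derivative z' s) (at s)" if "s \<in> {lo<..<hi}" for s
    using z' that unfolding pos_emden_fowler_on_def by blast
  consider "x = lo \<or> x = hi" | "\<xi> \<le> x" "x < hi" | "lo < x" "x < \<xi>" using x by fastforce
  then show ?thesis
  proof cases
    case 2
    have "z x - z \<xi> \<le> 0 * (x - \<xi>)"
      by (rule increment_le_of_deriv_le[where f = z and f' = z' and c = 0])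
         (use 2 z0 deriv pos_emden_fowler_on_deriv_antimono[OF _ z'(1), of \<xi>] z'(2) in auto)
    with z0 show ?thesis by simp
  next
    case 3
    have "- z \<xi> - - z x \<le> 0 * (\<xi> - x)"
      by (rule increment_le_of_deriv_le[where f = "\<lambda>s. - z s" and f' = "\<lambda>s. - z' s" and c = 0])
         (use 3 z0 deriv pos_emden_fowler_on_deriv_antimono[OF _ z'(1), of _ \<xi>] z'(2)
           in \<open>auto intro: DERIV_minus\<close>)
    with z0 show ?thesis by simp
  qed (use z0 in auto)
qed

lemma z_arc_symmetric:
  assumes \<alpha>: "\<alpha> > 0" and p: "p > 1" and z: "z_arc \<alpha> p 0 z lo hi"
  shows "lo = - hi" "\<And>x. x \<in> {lo..hi} \<Longrightarrow> z (- x) = z x"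
proof -
  have "z_arc \<alpha> p 0 (\<lambda>x. z (- x)) (- hi) (- lo)" using z_arc_reflect[OF z] by simp
  note reflected = z_arc_unique[OF \<alpha> p z this]
  show "lo = - hi" by (fact reflected(1))
  show "z (- x) = z x" if "x \<in> {lo..hi}" for x using reflected(3)[OF that] by simp
qed

text \<open>Along a positive arc \<open>z'\<close> is strictly decreasing; if \<open>z\<close> were even, \<open>-\<xi>\<close> would be a second
  interior maximum and \<open>z'\<close> would vanish on all of \<open>[-\<xi>, \<xi>]\<close>.\<close>
lemma z_arc_not_even:
  assumes \<alpha>: "\<alpha> > 0" and p: "p > 1" and z: "z_arc \<alpha> p \<xi> z (- A) A" and "\<xi> > 0"
  shows "\<not> (\<forall>x\<in>{- A..A}. z (- x) = z x)"
proof
  assume even: "\<forall>x\<in>{- A..A}. z (- x) = z x"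
  obtain z' where z': "pos_emden_fowler_on \<alpha> p 1 {- A<..<A} z z'" "z' \<xi> = 0"
    and z0: "\<xi> < A" "z \<xi> = 1"
    using z unfolding z_arc_iff by blast
  note sol = z'(1)[unfolded pos_emden_fowler_on_def, rule_format]
  have "z' (- \<xi>) = 0"
  proof (rule DERIV_local_max)
    show "(z has_real_derivative z' (- \<xi>)) (at (- \<xi>))" using sol[of "- \<xi>"] z0 \<open>\<xi> > 0\<close> by auto
    show "0 < A - \<xi>" using z0 by simp
    show "\<forall>y. \<bar>- \<xi> - y\<bar> < A - \<xi> \<longrightarrow> z y \<le> z (- \<xi>)"
    proof (intro allI impI)
      fix y assume "\<bar>- \<xi> - y\<bar> < A - \<xi>"
      then have "y \<in> {- A..A}" using \<open>\<xi> > 0\<close> by (auto simp: abs_less_iff)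
      then have "z y \<le> 1" by (rule z_arc_le_one[OF z])
      moreover have "z (- \<xi>) = 1" using even z0 \<open>\<xi> > 0\<close> by auto
      ultimately show "z y \<le> z (- \<xi>)" by simp
    qed
  qed
  moreover have "z' (\<xi> / 2) \<le> z' (- \<xi>)" "z' \<xi> \<le> z' (\<xi> / 2)"
    using z0 \<open>\<xi> > 0\<close> by (intro pos_emden_fowler_on_deriv_antimono[OF _ z'(1)]; simp)+
  ultimately have "z' (\<xi> / 2) = 0" using z'(2) by simp
  have deriv2: "(z' has_real_derivative - (1 * \<bar>s\<bar> powr \<alpha> * z s powr p)) (at s)"
    if "\<xi> / 2 \<le> s" "s \<le> \<xi>" for s
    using sol[of s] that z0 \<open>\<xi> > 0\<close> by auto
  have "\<xi> / 2 < \<xi>" using \<open>\<xi> > 0\<close> by simp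
  from MVT2[OF this deriv2] obtain c where c: "\<xi> / 2 < c" "c < \<xi>"
    "z' \<xi> - z' (\<xi> / 2) = (\<xi> - \<xi> / 2) * - (1 * \<bar>c\<bar> powr \<alpha> * z c powr p)"
    by blast
  have "z c > 0" using sol[of c] c z0 \<open>\<xi> > 0\<close> by auto
  moreover have "\<bar>c\<bar> powr \<alpha> > 0" using c \<open>\<xi> > 0\<close> by simp
  ultimately have "0 < (\<xi> - \<xi> / 2) * (1 * \<bar>c\<bar> powr \<alpha> * z c powr p)"
    using \<open>\<xi> > 0\<close> by (simp add: mult_pos_pos)
  with \<open>z' (\<xi> / 2) = 0\<close> c(3) z'(2) show False by simp
qed

lemma scaled_open_interval:
  assumes "(A :: real) > 0"
  shows "{x. A * x \<in> {- B<..<B}} = {- (B / A)<..<B / A}"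
proof -
  have "- B < A * x \<longleftrightarrow> - (B / A) < x" "A * x < B \<longleftrightarrow> x < B / A" for x
    using pos_divide_less_eq[OF assms, of "- B" x] pos_less_divide_eq[OF assms, of x B]
    by (simp_all add: mult.commute)
  then show ?thesis by auto
qed

lemma scaled_closed_interval:
  assumes "(A :: real) > 0"
  shows "{x. A * x \<in> {- B..B}} = {- (B / A)..B / A}"
proof -
  have "- B \<le> A * x \<longleftrightarrow> - (B / A) \<le> x" "A * x \<le> B \<longleftrightarrow> x \<le> B / A" for x
    using pos_divide_le_eq[OF assms, of "- B" x] pos_le_divide_eq[OF assms, of x B]
    by (simp_all add: mult.commute)
  then show ?thesis by auto
qed

lemma scaled_mem_interval: "(A :: real) > 0 \<Longrightarrow> x \<in> {- 1..1} \<Longrightarrow> A * x \<in> {- A..A}"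
  using mult_left_mono[of x 1 A] mult_left_mono[of "- 1" x A] by auto

text \<open>Substituting \<open>u x = m * z (A * x)\<close> into \<open>u'' + \<lambda> \<bar>x\<bar>\<^sup>\<alpha> u\<^sup>p = 0\<close> forces \<open>\<lambda> = A\<^bsup>\<alpha>+2\<^esup> / m\<^bsup>p-1\<^esup>\<close>.\<close>
definition arc_height :: "real \<Rightarrow> real \<Rightarrow> real \<Rightarrow> real \<Rightarrow> real" where
  "arc_height \<alpha> p lam A = (A powr (\<alpha> + 2) / lam) powr (1 / (p - 1))"

definition rescaled_arc :: "real \<Rightarrow> real \<Rightarrow> real \<Rightarrow> real \<Rightarrow> (real \<Rightarrow> real) \<Rightarrow> real \<Rightarrow> real" where
  "rescaled_arc \<alpha> p lam A z x = arc_height \<alpha> p lam A * z (A * x)"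

lemma arc_height_pos: "lam > 0 \<Longrightarrow> A > 0 \<Longrightarrow> arc_height \<alpha> p lam A > 0"
  unfolding arc_height_def by simp

lemma arc_height_powr:
  assumes "p > 1" "lam > 0" "A > 0"
  shows "arc_height \<alpha> p lam A powr (p - 1) = A powr (\<alpha> + 2) / lam"
  using assms unfolding arc_height_def by (simp add: powr_powr)

lemma arc_height_unique:
  assumes "p > 1" "A > 0" "m > 0" "lam = A powr (\<alpha> + 2) / m powr (p - 1)"
  shows "arc_height \<alpha> p lam A = m"
  using assms unfolding arc_height_def by (simp add: powr_powr)

lemma pos_sol_rescaled_arc:
  assumes p: "p > 1" and lam: "lam > 0" and z: "z_arc \<alpha> p \<xi> z (- A) A"
  shows "pos_sol \<alpha> p lam (rescaled_arc \<alpha> p lam A z)"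
proof -
  obtain z' where z': "- A < \<xi>" "\<xi> < A" "continuous_on {- A..A} z"
    "pos_emden_fowler_on \<alpha> p 1 {- A<..<A} z z'" "z (- A) = 0" "z A = 0"
    using z unfolding z_arc_iff by blast
  have A: "A > 0" "A \<noteq> 0" using z' by linarith+
  define m where "m = arc_height \<alpha> p lam A"
  have m: "m > 0" unfolding m_def using arc_height_pos[OF lam A(1)] .
  have "1 * \<bar>A\<bar> powr (\<alpha> + 2) / m powr (p - 1) = lam"
    unfolding m_def arc_height_powr[OF p lam A(1)] using A(1) lam by simp
  moreover have "{x. A * x \<in> {- A<..<A}} = {- 1<..<1}"
    using scaled_open_interval[OF A(1), of A] A by simp
  ultimately have "pos_emden_fowler_on \<alpha> p lam {- 1<..<1} (\<lambda>x. m * z (A * x)) (\<lambda>x. m * A * z' (A * x))"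
    using pos_emden_fowler_on_rescale[OF A(2) m z'(4)] by simp
  moreover have "continuous_on {- 1..1} (\<lambda>x. m * z (A * x))"
    using A scaled_mem_interval by (intro continuous_intros continuous_on_compose2[OF z'(3)]) auto
  moreover have "m * z (A * - 1) = 0" "m * z (A * 1) = 0" using z' by simp_all
  ultimately show ?thesis
    unfolding pos_sol_iff rescaled_arc_def m_def[symmetric] by blast
qed

lemma rescaled_arc_max:
  assumes p: "p > 1" and lam: "lam > 0" and z: "z_arc \<alpha> p \<xi> z (- A) A"
  shows "rescaled_arc \<alpha> p lam A z (\<xi> / A) = arc_height \<alpha> p lam A"
    and "lam = A powr (\<alpha> + 2) / rescaled_arc \<alpha> p lam A z (\<xi> / A) powr (p - 1)"
    and "\<And>x. x \<in> {- 1..1} \<Longrightarrow> rescaled_arc \<alpha> p lam A z x \<le> arc_height \<alpha> p lam A"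
proof -
  have "A > 0" "z \<xi> = 1" using z unfolding z_arc_iff by auto
  then show top: "rescaled_arc \<alpha> p lam A z (\<xi> / A) = arc_height \<alpha> p lam A"
    unfolding rescaled_arc_def by simp
  show "lam = A powr (\<alpha> + 2) / rescaled_arc \<alpha> p lam A z (\<xi> / A) powr (p - 1)"
    unfolding top arc_height_powr[OF p lam \<open>A > 0\<close>] using lam \<open>A > 0\<close> by simp
  fix x :: real assume "x \<in> {- 1..1}"
  then have "A * x \<in> {- A..A}" using \<open>A > 0\<close> by (rule scaled_mem_interval[rotated])
  then have "z (A * x) \<le> 1" by (rule z_arc_le_one[OF z])
  then show "rescaled_arc \<alpha> p lam A z x \<le> arc_height \<alpha> p lam A"
    unfolding rescaled_arc_def using arc_height_pos[OF lam \<open>A > 0\<close>]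
    by (simp add: mult_left_le)
qed

lemma rescaled_arc_cong:
  assumes "\<alpha> > 0" "p > 1" "z_arc \<alpha> p \<xi> z (- A) A" "z_arc \<alpha> p \<xi> w (- B) B" "x \<in> {- 1..1}"
  shows "rescaled_arc \<alpha> p lam A z x = rescaled_arc \<alpha> p lam B w x"
proof -
  have "A = B" "A > 0" using z_arc_unique(2)[OF assms(1-4)] assms(3) unfolding z_arc_iff by auto
  moreover have "A * x \<in> {- A..A}"
    using \<open>A > 0\<close> assms(5) by (rule scaled_mem_interval)
  ultimately show ?thesis
    unfolding rescaled_arc_def using z_arc_unique(3)[OF assms(1-4)] by simp
qed

lemma rescaled_arc_reflect:
  "rescaled_arc \<alpha> p lam A (\<lambda>x. z (- x)) = (\<lambda>x. rescaled_arc \<alpha> p lam A z (- x))"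
  by (simp add: rescaled_arc_def fun_eq_iff)

lemma rescaled_arc_even:
  assumes "\<alpha> > 0" "p > 1" and z: "z_arc \<alpha> p 0 z (- A) A" and x: "x \<in> {- 1..1}"
  shows "rescaled_arc \<alpha> p lam A z (- x) = rescaled_arc \<alpha> p lam A z x"
proof -
  have "A > 0" using z unfolding z_arc_iff by auto
  with x have "A * x \<in> {- A..A}" by (rule scaled_mem_interval[rotated])
  then show ?thesis
    unfolding rescaled_arc_def using z_arc_symmetric(2)[OF assms(1-3)] by simp
qed

lemma rescaled_arc_not_even:
  assumes "\<alpha> > 0" "p > 1" and z: "z_arc \<alpha> p \<xi> z (- A) A" and "\<xi> > 0" and "lam > 0"
  shows "\<not> (\<forall>x\<in>{- 1..1}. rescaled_arc \<alpha> p lam A z (- x) = rescaled_arc \<alpha> p lam A z x)"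
proof
  assume even: "\<forall>x\<in>{- 1..1}. rescaled_arc \<alpha> p lam A z (- x) = rescaled_arc \<alpha> p lam A z x"
  have "A > 0" using z unfolding z_arc_iff by auto
  have "z (- y) = z y" if "y \<in> {- A..A}" for y
  proof -
    have "y / A \<in> {- 1..1}" using scaled_closed_interval[of "1 / A" 1] that \<open>A > 0\<close> by auto
    with even have "rescaled_arc \<alpha> p lam A z (- (y / A)) = rescaled_arc \<alpha> p lam A z (y / A)" by blast
    then have "arc_height \<alpha> p lam A * z (- y) = arc_height \<alpha> p lam A * z y"
      unfolding rescaled_arc_def using \<open>A > 0\<close> by simp
    then show ?thesis using arc_height_pos[OF \<open>lam > 0\<close> \<open>A > 0\<close>, of \<alpha> p] by simp
  qed
  then show False using z_arc_not_even[OF assms(1-4)] by blast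
qed

lemma pos_sol_is_rescaled_arc:
  assumes \<alpha>: "\<alpha> > 0" and p: "p > 1" and lam: "lam > 0" and u: "pos_sol \<alpha> p lam u"
  obtains \<xi> z A where "z_arc \<alpha> p \<xi> z (- A) A" "\<And>x. x \<in> {- 1..1} \<Longrightarrow> u x = rescaled_arc \<alpha> p lam A z x"
proof -
  obtain u' where u': "continuous_on {- 1..1} u" "u (- 1) = 0" "u 1 = 0"
    "pos_emden_fowler_on \<alpha> p lam {- 1<..<1} u u'"
    using u unfolding pos_sol_iff by blast
  note sol = u'(4)[unfolded pos_emden_fowler_on_def, rule_format]
  obtain \<eta> where \<eta>: "- 1 < \<eta>" "\<eta> < 1" "u' \<eta> = 0"
    using pos_emden_fowler_on_critical_point[OF _ u'] by auto
  define m where "m = u \<eta>"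
  define k where "k = (lam * m powr (p - 1)) powr (1 / (\<alpha> + 2))"
  have m: "m > 0" using sol \<eta> unfolding m_def by auto
  have k: "k > 0" "k powr (\<alpha> + 2) = lam * m powr (p - 1)"
    unfolding k_def using lam m \<alpha> by (auto simp: powr_powr)
  define z where "z x = 1 / m * u (1 / k * x)" for x
  have "lam * \<bar>1 / k\<bar> powr (\<alpha> + 2) / (1 / m) powr (p - 1) = 1"
    using k m lam by (simp add: powr_divide)
  moreover have "{x. 1 / k * x \<in> {- 1<..<1}} = {- k<..<k}"
    using scaled_open_interval[of "1 / k" 1] k(1) by simp
  ultimately have sol_z: "pos_emden_fowler_on \<alpha> p 1 {- k<..<k} z (\<lambda>x. 1 / m * (1 / k) * u' (1 / k * x))"
    using pos_emden_fowler_on_rescale[of "1 / k" "1 / m", OF _ _ u'(4)] k m lam unfolding z_def by simp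
  have "continuous_on {- k..k} z"
    unfolding z_def using k
    using scaled_closed_interval[of "1 / k" 1] k(1)
    by (intro continuous_intros continuous_on_compose2[OF u'(1)]) auto
  moreover have "- k < k * \<eta>" "k * \<eta> < k"
    using mult_strict_left_mono[OF \<eta>(1) k(1)] mult_strict_left_mono[OF \<eta>(2) k(1)] by simp_all
  moreover have "\<exists>z'. pos_emden_fowler_on \<alpha> p 1 {- k<..<k} z z' \<and> z' (k * \<eta>) = 0"
    using sol_z \<eta>(3) k(1) by (intro exI[of _ "\<lambda>x. 1 / m * (1 / k) * u' (1 / k * x)"]) simp
  moreover have "z (k * \<eta>) = 1" "z (- k) = 0" "z k = 0"
    unfolding z_def using k(1) m u'(2,3) by (simp_all add: m_def)
  ultimately have arc: "z_arc \<alpha> p (k * \<eta>) z (- k) k"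
    unfolding z_arc_iff by (intro conjI)
  have "arc_height \<alpha> p lam k = m"
    using k m by (intro arc_height_unique[OF p k(1) m]) simp
  then have "u x = rescaled_arc \<alpha> p lam k z x" for x
    unfolding rescaled_arc_def z_def using k(1) m by simp
  with arc that show thesis by blast
qed

section \<open>Classification of the positive solutions\<close>

lemma pos_sol_classification:
  assumes \<alpha>: "\<alpha> > 0" and p: "p > 1" and lam: "lam > 0"
    and unique: "\<forall>\<xi>>0. a_root \<alpha> p \<xi> = - b_root \<alpha> p \<xi> \<longrightarrow> \<xi> = \<xi>0"
    and z0: "z_arc \<alpha> p \<xi>0 z0 (- A0) A0" and z1: "z_arc \<alpha> p 0 z1 (- A1) A1"
    and u: "pos_sol \<alpha> p lam u"
  shows "(\<forall>x\<in>{-1..1}. u x = rescaled_arc \<alpha> p lam A1 z1 x) \<or>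
    (\<forall>x\<in>{-1..1}. u x = rescaled_arc \<alpha> p lam A0 z0 x) \<or>
    (\<forall>x\<in>{-1..1}. u x = rescaled_arc \<alpha> p lam A0 z0 (- x))"
proof -
  obtain \<xi> z A where z: "z_arc \<alpha> p \<xi> z (- A) A"
    and u_eq: "\<And>x. x \<in> {- 1..1} \<Longrightarrow> u x = rescaled_arc \<alpha> p lam A z x"
    using pos_sol_is_rescaled_arc[OF \<alpha> p lam u] by blast
  have roots_symmetric: "a_root \<alpha> p \<eta> = - b_root \<alpha> p \<eta>" if "z_arc \<alpha> p \<eta> w (- B) B" for \<eta> w B
    using a_root_eq[OF \<alpha> p that] b_root_eq[OF \<alpha> p that] by simp
  consider "\<xi> = 0" | "\<xi> > 0" | "\<xi> < 0" by linarith
  then show ?thesis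
  proof cases
    case 1
    then show ?thesis using rescaled_arc_cong[OF \<alpha> p _ z1] z u_eq by auto
  next
    case 2
    then have "\<xi> = \<xi>0" using unique roots_symmetric[OF z] by blast
    then show ?thesis using rescaled_arc_cong[OF \<alpha> p _ z0] z u_eq by auto
  next
    case 3
    have zr: "z_arc \<alpha> p (- \<xi>) (\<lambda>x. z (- x)) (- A) A" using z_arc_reflect[OF z] by simp
    with 3 have "- \<xi> = \<xi>0" using unique roots_symmetric[OF zr] by auto
    then have "rescaled_arc \<alpha> p lam A z (- x) = rescaled_arc \<alpha> p lam A0 z0 x" if "x \<in> {- 1..1}" for x
      using rescaled_arc_cong[OF \<alpha> p zr[unfolded \<open>- \<xi> = \<xi>0\<close>] z0 that]
      by (simp add: rescaled_arc_reflect)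
    then show ?thesis using u_eq by (metis atLeastAtMost_iff minus_minus neg_le_iff_le)
  qed
qed

lemma distinct_of_even_not_even:
  fixes f g :: "real \<Rightarrow> real"
  assumes even: "\<forall>x\<in>{-1..1}. f (- x) = f x" and not_even: "\<not> (\<forall>x\<in>{-1..1}. g (- x) = g x)"
  shows "\<exists>x\<in>{-1..1}. f x \<noteq> g x" "\<exists>x\<in>{-1..1}. f x \<noteq> g (- x)" "\<exists>x\<in>{-1..1}. g x \<noteq> g (- x)"
proof -
  have reflect: "- x \<in> {-1..1}" if "x \<in> {-1..1}" for x :: real using that by auto
  show "\<exists>x\<in>{-1..1}. g x \<noteq> g (- x)" using not_even by metis
  show "\<exists>x\<in>{-1..1}. f x \<noteq> g x"
    using not_even even reflect by (metis minus_minus)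
  show "\<exists>x\<in>{-1..1}. f x \<noteq> g (- x)"
    using not_even even reflect by (metis minus_minus)
qed

theorem theorem6p1:
  fixes \<alpha> p \<xi>0 lam :: real
  assumes "\<alpha> > 0" and "p > 1"
    and "\<xi>0 > 0" and "a_root \<alpha> p \<xi>0 = - b_root \<alpha> p \<xi>0"
    and "\<forall>\<xi>>0. a_root \<alpha> p \<xi> = - b_root \<alpha> p \<xi> \<longrightarrow> \<xi> = \<xi>0"
    and "lam > 0"
  shows "\<exists>u1 u2 u3.
           pos_sol \<alpha> p lam u1 \<and> pos_sol \<alpha> p lam u2 \<and> pos_sol \<alpha> p lam u3 \<and>
           (\<forall>x\<in>{-1..1}. u1 (-x) = u1 x) \<and>
           (\<forall>x\<in>{-1..1}. u2 x \<le> u2 (\<xi>0 / a_root \<alpha> p \<xi>0)) \<and>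
           (\<forall>x\<in>{-1..1}. u3 x = u2 (-x)) \<and>
           (\<exists>x\<in>{-1..1}. u1 x \<noteq> u2 x) \<and> (\<exists>x\<in>{-1..1}. u1 x \<noteq> u3 x) \<and>
           (\<exists>x\<in>{-1..1}. u2 x \<noteq> u3 x) \<and>
           (\<forall>u. pos_sol \<alpha> p lam u \<longrightarrow>
              (\<forall>x\<in>{-1..1}. u x = u1 x) \<or> (\<forall>x\<in>{-1..1}. u x = u2 x) \<or>
              (\<forall>x\<in>{-1..1}. u x = u3 x)) \<and>
           lam = a_root \<alpha> p \<xi>0 powr (\<alpha> + 2) / u2 (\<xi>0 / a_root \<alpha> p \<xi>0) powr (p - 1)"
proof -
  note \<alpha> = assms(1) and p = assms(2) and lam = assms(6)
  obtain z0 lo A0 where arc0: "z_arc \<alpha> p \<xi>0 z0 lo A0" using z_arc_exists[OF \<alpha> p] .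
  have A0: "a_root \<alpha> p \<xi>0 = A0" using a_root_eq[OF \<alpha> p arc0] .
  have z0: "z_arc \<alpha> p \<xi>0 z0 (- A0) A0" using arc0 b_root_eq[OF \<alpha> p arc0] assms(4) A0 by simp
  obtain z1 lo1 A1 where arc1: "z_arc \<alpha> p 0 z1 lo1 A1" using z_arc_exists[OF \<alpha> p] .
  have z1: "z_arc \<alpha> p 0 z1 (- A1) A1" using arc1 z_arc_symmetric(1)[OF \<alpha> p arc1] by simp
  let ?u1 = "rescaled_arc \<alpha> p lam A1 z1" and ?u2 = "rescaled_arc \<alpha> p lam A0 z0"
  have "z_arc \<alpha> p (- \<xi>0) (\<lambda>x. z0 (- x)) (- A0) A0" using z_arc_reflect[OF z0] by simp
  from pos_sol_rescaled_arc[OF p lam this] have sol3: "pos_sol \<alpha> p lam (\<lambda>x. ?u2 (- x))"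
    by (simp add: rescaled_arc_reflect)
  have even: "\<forall>x\<in>{-1..1}. ?u1 (- x) = ?u1 x" using rescaled_arc_even[OF \<alpha> p z1] by blast
  note distinct = distinct_of_even_not_even[OF even rescaled_arc_not_even[OF \<alpha> p z0 assms(3) lam]]
  have max: "\<forall>x\<in>{-1..1}. ?u2 x \<le> ?u2 (\<xi>0 / A0)"
    using rescaled_arc_max(1,3)[OF p lam z0] by simp
  note lam_eq = rescaled_arc_max(2)[OF p lam z0]
  have "\<forall>u. pos_sol \<alpha> p lam u \<longrightarrow> (\<forall>x\<in>{-1..1}. u x = ?u1 x) \<or>
      (\<forall>x\<in>{-1..1}. u x = ?u2 x) \<or> (\<forall>x\<in>{-1..1}. u x = ?u2 (- x))"
    using pos_sol_classification[OF \<alpha> p lam assms(5) z0 z1] by blast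
  then show ?thesis
    unfolding A0
    by (intro exI[of _ ?u1] exI[of _ ?u2] exI[of _ "\<lambda>x. ?u2 (- x)"] conjI distinct max sol3 even lam_eq
        pos_sol_rescaled_arc[OF p lam z0] pos_sol_rescaled_arc[OF p lam z1] ballI refl)
qed

end
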